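(* Let $N\ge 1$ be an integer, $0<\lambda<1$, $\nu=1-\lambda$ and $0<\delta\le 1$. Then $F(N,\delta,\lambda)=\zeta(N,\delta,\lambda)/\delta$, where $$\zeta(N,\delta,\lambda)=\begin{cases}0,& \delta\le \lambda^N,\\ \zeta(N,\delta,\lambda,k_* ),&\delta>\lambda^N,\end{cases}\qquad \zeta(N,\delta,\lambda,k):=\frac{\lambda\{\delta[1+(N-k)\nu]-\lambda^k\}}{\nu(k\nu+N\lambda)},$$ and $k_*$ is the largest nonnegative integer $k$ satisfying $(N+1-k)\lambda^k+k\lambda^{k-1}\ge (N+1)\delta$ (with the convention that the left-hand side equals $N+1$ for $k=0$).
   Context: Let $\mathcal H$ be a Hilbert space of finite dimension $D\ge 2$ and $|\Psi\rangle\in\mathcal H$ a unit vector. For $0\le\lambda<1$ let $\Omega_\lambda=|\Psi\rangle\langle\Psi|+\lambda(1-|\Psi\rangle\langle\Psi|)$ (a homogeneous strategy). For an integer $N\ge1$ and a density operator $\rho$ on $\mathcal H^{\otimes(N+1)}$ put $p_\rho=\mathrm{tr}[(\Omega_\lambda^{\otimes N}\otimes 1)\rho]$ and $f_\rho=\mathrm{tr}[(\Omega_\lambda^{\otimes N}\otimes|\Psi\rangle\langle\Psi|)\rho]$. With minimization over permutation-invariant density operators $\rho$ on $\mathcal H^{\otimes(N+1)}$, define $\zeta(N,\delta,\lambda)=\min\{f_\rho: p_\rho\ge\delta\}$ for $0\le\delta\le1$ and $F(N,\delta,\lambda)=\min\{f_\rho/p_\rho: p_\rho\ge\delta\}$ for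 $0<\delta\le1$. *)

theory Defs
  imports Complex_Main "HOL-Combinatorics.Permutations"
begin

text \<open>Concrete model: H = C^D with computational basis indexed by 0..D-1;
  H^{(x)n} has basis indexed by lists of length n with entries < D.\<close>

definition idx :: "nat \<Rightarrow> nat \<Rightarrow> nat list set" where
  "idx D n = {xs. length xs = n \<and> set xs \<subseteq> {..<D}}"

definition kdelta :: "nat \<Rightarrow> nat \<Rightarrow> complex" where
  "kdelta a b = (if a = b then 1 else 0)"

definition proj :: "(nat \<Rightarrow> complex) \<Rightarrow> nat \<Rightarrow> nat \<Rightarrow> complex" where
  "proj psi a b = psi a * cnj (psi b)"

definition Omega :: "(nat \<Rightarrow> complex) \<Rightarrow> real \<Rightarrow> nat \<Rightarrow> nat \<Rightarrow> complex" where
  "Omega psi lam a b = proj psi a b + complex_of_real lam * (kdelta a b - proj psi a b)"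

text \<open>Matrix entries of A^{(x)N} (x) B on H^{(x)(N+1)}\<close>
definition tensorOp :: "nat \<Rightarrow> (nat \<Rightarrow> nat \<Rightarrow> complex) \<Rightarrow> (nat \<Rightarrow> nat \<Rightarrow> complex)
    \<Rightarrow> nat list \<Rightarrow> nat list \<Rightarrow> complex" where
  "tensorOp N A B i j = (\<Prod>t<N. A (i ! t) (j ! t)) * B (i ! N) (j ! N)"

definition trprod :: "nat \<Rightarrow> nat \<Rightarrow> (nat list \<Rightarrow> nat list \<Rightarrow> complex)
    \<Rightarrow> (nat list \<Rightarrow> nat list \<Rightarrow> complex) \<Rightarrow> complex" where
  "trprod D n X rho = (\<Sum>i\<in>idx D n. \<Sum>j\<in>idx D n. X i j * rho j i)"

definition density_op :: "nat \<Rightarrow> nat \<Rightarrow> (nat list \<Rightarrow> nat list \<Rightarrow> complex) \<Rightarrow> bool" where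
  "density_op D n rho \<longleftrightarrow>
     (\<forall>i\<in>idx D n. \<forall>j\<in>idx D n. rho i j = cnj (rho j i)) \<and>
     (\<forall>v :: nat list \<Rightarrow> complex.
        0 \<le> Re (\<Sum>i\<in>idx D n. \<Sum>j\<in>idx D n. cnj (v i) * rho i j * v j)) \<and>
     (\<Sum>i\<in>idx D n. rho i i) = 1"

definition permute_idx :: "(nat \<Rightarrow> nat) \<Rightarrow> nat list \<Rightarrow> nat list" where
  "permute_idx sigma xs = map (\<lambda>t. xs ! sigma t) [0..<length xs]"

text \<open>rho = P_sigma rho P_sigma^dagger for all permutations sigma\<close>
definition perm_inv :: "nat \<Rightarrow> nat \<Rightarrow> (nat list \<Rightarrow> nat list \<Rightarrow> complex) \<Rightarrow> bool" where
  "perm_inv D n rho \<longleftrightarrow>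
     (\<forall>sigma. sigma permutes {..<n} \<longrightarrow>
        (\<forall>i\<in>idx D n. \<forall>j\<in>idx D n.
            rho (permute_idx sigma i) (permute_idx sigma j) = rho i j))"

definition pval :: "nat \<Rightarrow> nat \<Rightarrow> (nat \<Rightarrow> complex) \<Rightarrow> real
    \<Rightarrow> (nat list \<Rightarrow> nat list \<Rightarrow> complex) \<Rightarrow> real" where
  "pval D N psi lam rho = Re (trprod D (N+1) (tensorOp N (Omega psi lam) kdelta) rho)"

definition fval :: "nat \<Rightarrow> nat \<Rightarrow> (nat \<Rightarrow> complex) \<Rightarrow> real
    \<Rightarrow> (nat list \<Rightarrow> nat list \<Rightarrow> complex) \<Rightarrow> real" where
  "fval D N psi lam rho = Re (trprod D (N+1) (tensorOp N (Omega psi lam) (proj psi)) rho)"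

definition feasible :: "nat \<Rightarrow> nat \<Rightarrow> (nat \<Rightarrow> complex) \<Rightarrow> real \<Rightarrow> real
    \<Rightarrow> (nat list \<Rightarrow> nat list \<Rightarrow> complex) set" where
  "feasible D N psi lam delta =
     {rho. density_op D (N+1) rho \<and> perm_inv D (N+1) rho \<and> pval D N psi lam rho \<ge> delta}"

text \<open>zeta(N,delta,lambda) and F(N,delta,lambda) (minima, written as infima)\<close>
definition zeta :: "nat \<Rightarrow> nat \<Rightarrow> (nat \<Rightarrow> complex) \<Rightarrow> real \<Rightarrow> real \<Rightarrow> real" where
  "zeta D N psi lam delta = Inf (fval D N psi lam ` feasible D N psi lam delta)"

definition Ffid :: "nat \<Rightarrow> nat \<Rightarrow> (nat \<Rightarrow> complex) \<Rightarrow> real \<Rightarrow> real \<Rightarrow> real" where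
  "Ffid D N psi lam delta =
     Inf ((\<lambda>rho. fval D N psi lam rho / pval D N psi lam rho) ` feasible D N psi lam delta)"

definition zeta_k :: "nat \<Rightarrow> real \<Rightarrow> real \<Rightarrow> nat \<Rightarrow> real" where
  "zeta_k N delta lam k =
     lam * (delta * (1 + (real N - real k) * (1 - lam)) - lam ^ k)
       / ((1 - lam) * (real k * (1 - lam) + real N * lam))"

definition kstar_lhs :: "nat \<Rightarrow> real \<Rightarrow> nat \<Rightarrow> real" where
  "kstar_lhs N lam k =
     (if k = 0 then real N + 1
      else (real N + 1 - real k) * lam ^ k + real k * lam ^ (k - 1))"

definition kstar :: "nat \<Rightarrow> real \<Rightarrow> real \<Rightarrow> nat" where
  "kstar N delta lam = (GREATEST k. kstar_lhs N lam k \<ge> (real N + 1) * delta)"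

definition zeta_formula :: "nat \<Rightarrow> real \<Rightarrow> real \<Rightarrow> real" where
  "zeta_formula N delta lam =
     (if delta \<le> lam ^ N then 0 else zeta_k N delta lam (kstar N delta lam))"

end

theory Submission
  imports Defs
begin

text \<open>
  Write \<open>P = |Psi><Psi|\<close>, \<open>Q = 1 - P\<close>, so that \<open>Omega = P + lam Q\<close>. Expanding the tensor
  products writes \<open>p\<close> and \<open>f\<close> as linear combinations of the weights \<open>w T = tr(E_T rho)\<close>, where
  \<open>E_T\<close> carries \<open>Q\<close> on the factors in \<open>T\<close> and \<open>P\<close> on the others. These weights form a
  probability distribution on the subsets of the \<open>N + 1\<close> factors which, for permutation-invariant
  \<open>rho\<close>, is invariant under permutations. Averaging over the position of the last factor gives
  \<open>(N + 1) p = \<Sum>T. w T g |T|\<close> and \<open>(N + 1) f = \<Sum>T. w T h |T|\<close> with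
  \<open>g k = k lam^(k-1) + (N + 1 - k) lam^k\<close> and \<open>h k = (N + 1 - k) lam^k\<close>, so both problems are
  linear programs in the distribution of \<open>|T|\<close>.

  By Bernoulli's inequality, for every \<open>m\<close> the line \<open>p \<mapsto> zeta(N, p, lam, m)\<close> lies below all
  points \<open>(g k, h k) / (N + 1)\<close> and passes through those with \<open>k = m, m + 1\<close>. This gives
  \<open>f \<ge> zeta(N, p, lam, m) \<ge> zeta(N, delta, lam, m)\<close>, and the same bound for \<open>f / p\<close> since the
  line has a nonpositive intercept. For \<open>m = k_*\<close> the two touching points enclose \<open>p = delta\<close>, and
  a mixture of symmetrised product states of \<open>Psi\<close> and a unit vector orthogonal to it, with
  \<open>|T| \<in> {m, m + 1}\<close>, attains the bound. For \<open>delta \<le> lam^N\<close> the state orthogonal to \<open>Psi\<close> on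
  every factor has \<open>p = lam^N\<close> and \<open>f = 0\<close>.
\<close>

section \<open>Sums over basis labels\<close>

lemma finite_idx: "finite (idx D n)"
proof -
  have "idx D n = {xs. set xs \<subseteq> {..<D} \<and> length xs = n}" unfolding idx_def by auto
  then show ?thesis using finite_lists_length_eq[of "{..<D}" n] by simp
qed

lemma idx_Suc: "idx D (Suc n) = (\<lambda>(c, xs). c # xs) ` ({..<D} \<times> idx D n)"
  unfolding idx_def by (auto simp: length_Suc_conv image_iff)

lemma idx_nth_less: "i \<in> idx D n \<Longrightarrow> t < n \<Longrightarrow> i ! t < D"
  unfolding idx_def by (auto dest!: subsetD[of "set i" _ "i ! t"])

lemma sum_idx_prod:
  "(\<Sum>k\<in>idx D n. \<Prod>t<n. F t (k ! t)) = (\<Prod>t<n. \<Sum>c<D. F t c :: 'a::comm_semiring_1)"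
proof (induction n arbitrary: F)
  case 0
  have "idx D 0 = {[]}" unfolding idx_def by auto
  then show ?case by simp
next
  case (Suc n)
  have inj: "inj_on (\<lambda>(c, xs). c # xs) ({..<D} \<times> idx D n)" by (auto simp: inj_on_def)
  have "(\<Sum>k\<in>idx D (Suc n). \<Prod>t<Suc n. F t (k ! t))
      = (\<Sum>(c, xs)\<in>{..<D} \<times> idx D n. \<Prod>t<Suc n. F t ((c # xs) ! t))"
    unfolding idx_Suc by (subst sum.reindex[OF inj]) (simp add: case_prod_unfold)
  also have "\<dots> = (\<Sum>c<D. \<Sum>xs\<in>idx D n. F 0 c * (\<Prod>t<n. F (Suc t) (xs ! t)))"
    by (subst sum.cartesian_product[symmetric])
      (simp add: prod.lessThan_Suc_shift del: prod.lessThan_Suc)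
  also have "\<dots> = (\<Sum>c<D. F 0 c * (\<Prod>t<n. \<Sum>c<D. F (Suc t) c))"
    by (simp add: sum_distrib_left[symmetric] Suc.IH[of "\<lambda>t. F (Suc t)"])
  also have "\<dots> = (\<Prod>t<Suc n. \<Sum>c<D. F t c)"
    by (simp add: prod.lessThan_Suc_shift sum_distrib_right del: prod.lessThan_Suc)
  finally show ?case .
qed

lemma sum2_idx_prod:
  "(\<Sum>i\<in>idx D n. \<Sum>j\<in>idx D n. \<Prod>t<n. F t (i ! t) (j ! t))
     = (\<Prod>t<n. \<Sum>a<D. \<Sum>b<D. F t a b :: 'a::comm_semiring_1)"
proof -
  have "(\<Sum>i\<in>idx D n. \<Sum>j\<in>idx D n. \<Prod>t<n. F t (i ! t) (j ! t))
      = (\<Sum>i\<in>idx D n. \<Prod>t<n. \<Sum>b<D. F t (i ! t) b)"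
    by (rule sum.cong[OF refl]) (rule sum_idx_prod)
  also have "\<dots> = (\<Prod>t<n. \<Sum>a<D. \<Sum>b<D. F t a b)"
    by (rule sum_idx_prod)
  finally show ?thesis .
qed

lemma kdelta_sum_left: "a < D \<Longrightarrow> (\<Sum>c<D. kdelta a c * f c) = f a"
  by (simp add: kdelta_def if_distrib[of "\<lambda>x. x * _"] cong: if_cong)

lemma kdelta_sum_right: "b < D \<Longrightarrow> (\<Sum>c<D. f c * kdelta c b) = f b"
  by (simp add: kdelta_def if_distrib[of "\<lambda>x. _ * x"] cong: if_cong)

lemma prod_kdelta_idx:
  assumes "i \<in> idx D n" "j \<in> idx D n"
  shows "(\<Prod>t<n. kdelta (i ! t) (j ! t)) = (if i = j then 1 else 0)"
proof (cases "i = j")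
  case True
  then show ?thesis by (simp add: kdelta_def)
next
  case False
  have "length i = n" "length j = n" using assms by (auto simp: idx_def)
  with False obtain t where "t < n" "i ! t \<noteq> j ! t" using nth_equalityI by metis
  then show ?thesis using False by (auto simp: kdelta_def intro!: prod_zero)
qed

lemma trprod_sum:
  assumes "finite S"
  shows "trprod D n (\<lambda>i j. \<Sum>T\<in>S. f T * X T i j) rho = (\<Sum>T\<in>S. f T * trprod D n (X T) rho)"
proof -
  have "trprod D n (\<lambda>i j. \<Sum>T\<in>S. f T * X T i j) rho
      = (\<Sum>i\<in>idx D n. \<Sum>j\<in>idx D n. \<Sum>T\<in>S. f T * (X T i j * rho j i))"
    unfolding trprod_def by (simp add: sum_distrib_right mult.assoc)
  also have "\<dots> = (\<Sum>T\<in>S. \<Sum>i\<in>idx D n. \<Sum>j\<in>idx D n. f T * (X T i j * rho j i))"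
    by (simp add: sum.swap[of _ S])
  also have "\<dots> = (\<Sum>T\<in>S. f T * trprod D n (X T) rho)"
    unfolding trprod_def by (simp add: sum_distrib_left)
  finally show ?thesis .
qed

lemma trprod_id:
  assumes "density_op D n rho"
  shows "trprod D n (\<lambda>i j. \<Prod>t<n. kdelta (i ! t) (j ! t)) rho = 1"
proof -
  have "trprod D n (\<lambda>i j. \<Prod>t<n. kdelta (i ! t) (j ! t)) rho = (\<Sum>i\<in>idx D n. rho i i)"
    unfolding trprod_def
  proof (rule sum.cong[OF refl])
    fix i assume i: "i \<in> idx D n"
    have "(\<Sum>j\<in>idx D n. (\<Prod>t<n. kdelta (i ! t) (j ! t)) * rho j i)
        = (\<Sum>j\<in>idx D n. if i = j then rho j i else 0)"
      by (rule sum.cong[OF refl]) (simp add: prod_kdelta_idx[OF i])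
    also have "\<dots> = rho i i" using i by (simp add: finite_idx)
    finally show "(\<Sum>j\<in>idx D n. (\<Prod>t<n. kdelta (i ! t) (j ! t)) * rho j i) = rho i i" .
  qed
  also have "\<dots> = 1" using assms unfolding density_op_def by blast
  finally show ?thesis .
qed

section \<open>Decomposition into patterns of projectors\<close>

definition proj_compl :: "(nat \<Rightarrow> complex) \<Rightarrow> nat \<Rightarrow> nat \<Rightarrow> complex" where
  "proj_compl psi a b = kdelta a b - proj psi a b"

definition pattern_op ::
    "(nat \<Rightarrow> complex) \<Rightarrow> nat \<Rightarrow> nat set \<Rightarrow> nat list \<Rightarrow> nat list \<Rightarrow> complex" where
  "pattern_op psi n T i j = (\<Prod>t<n. (if t \<in> T then proj_compl psi else proj psi) (i ! t) (j ! t))"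

definition pattern_weight :: "nat \<Rightarrow> nat \<Rightarrow> (nat \<Rightarrow> complex)
    \<Rightarrow> (nat list \<Rightarrow> nat list \<Rightarrow> complex) \<Rightarrow> nat set \<Rightarrow> real" where
  "pattern_weight D n psi rho T = Re (trprod D n (pattern_op psi n T) rho)"

lemma prod_proj_add_proj_compl:
  "(\<Prod>t<n. proj psi (i ! t) (j ! t) + of_real (c t) * proj_compl psi (i ! t) (j ! t))
    = (\<Sum>T\<in>Pow {..<n}. of_real (\<Prod>t\<in>T. c t) * pattern_op psi n T i j)"
proof -
  have "(\<Prod>t<n. proj psi (i ! t) (j ! t) + of_real (c t) * proj_compl psi (i ! t) (j ! t))
      = (\<Sum>T\<in>Pow {..<n}. (\<Prod>t\<in>T. of_real (c t) * proj_compl psi (i ! t) (j ! t))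
          * (\<Prod>t\<in>{..<n} - T. proj psi (i ! t) (j ! t)))"
    by (subst add.commute) (rule prod_add, simp)
  also have "\<dots> = (\<Sum>T\<in>Pow {..<n}. of_real (\<Prod>t\<in>T. c t) * pattern_op psi n T i j)"
  proof (rule sum.cong[OF refl])
    fix T assume "T \<in> Pow {..<n}"
    then have "{..<n} \<inter> {t. t \<in> T} = T" "{..<n} \<inter> - {t. t \<in> T} = {..<n} - T" by auto
    then have "pattern_op psi n T i j
        = (\<Prod>t\<in>T. proj_compl psi (i ! t) (j ! t)) * (\<Prod>t\<in>{..<n} - T. proj psi (i ! t) (j ! t))"
      unfolding pattern_op_def if_distrib[of "\<lambda>A. A (i ! _) (j ! _)"]
      by (subst prod.If_cases) simp_all
    then show "(\<Prod>t\<in>T. of_real (c t) * proj_compl psi (i ! t) (j ! t))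
        * (\<Prod>t\<in>{..<n} - T. proj psi (i ! t) (j ! t))
      = of_real (\<Prod>t\<in>T. c t) * pattern_op psi n T i j"
      by (simp add: prod.distrib mult.assoc)
  qed
  finally show ?thesis .
qed

lemma trprod_prod_proj_add_proj_compl:
  "Re (trprod D n
      (\<lambda>i j. \<Prod>t<n. proj psi (i ! t) (j ! t) + of_real (c t) * proj_compl psi (i ! t) (j ! t)) rho)
    = (\<Sum>T\<in>Pow {..<n}. (\<Prod>t\<in>T. c t) * pattern_weight D n psi rho T)"
  unfolding prod_proj_add_proj_compl pattern_weight_def
  by (simp add: trprod_sum Re_sum del: of_real_prod)

lemma sum_pattern_weight:
  assumes "density_op D n rho"
  shows "(\<Sum>T\<in>Pow {..<n}. pattern_weight D n psi rho T) = 1"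
  using trprod_prod_proj_add_proj_compl[of D n psi "\<lambda>_. 1" rho] trprod_id[OF assms]
  by (simp add: proj_compl_def)

lemma proj_idem:
  assumes "(\<Sum>c<D. psi c * cnj (psi c)) = 1"
  shows "(\<Sum>c<D. proj psi a c * proj psi c b) = proj psi a b"
proof -
  have "(\<Sum>c<D. proj psi a c * proj psi c b) = proj psi a b * (\<Sum>c<D. psi c * cnj (psi c))"
    unfolding proj_def sum_distrib_left by (rule sum.cong) (auto simp: ac_simps)
  then show ?thesis using assms by simp
qed

lemma proj_compl_idem:
  assumes "(\<Sum>c<D. psi c * cnj (psi c)) = 1" and "a < D" "b < D"
  shows "(\<Sum>c<D. proj_compl psi a c * proj_compl psi c b) = proj_compl psi a b"
proof -
  have "(\<Sum>c<D. proj_compl psi a c * proj_compl psi c b)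
     = (\<Sum>c<D. kdelta a c * kdelta c b) - (\<Sum>c<D. kdelta a c * proj psi c b)
       - (\<Sum>c<D. proj psi a c * kdelta c b) + (\<Sum>c<D. proj psi a c * proj psi c b)"
    unfolding proj_compl_def by (simp add: algebra_simps sum_subtractf sum.distrib)
  also have "\<dots> = proj_compl psi a b"
    using assms by (simp add: kdelta_sum_left kdelta_sum_right proj_idem proj_compl_def)
  finally show ?thesis .
qed

lemma pattern_op_idem:
  assumes nrm: "(\<Sum>c<D. psi c * cnj (psi c)) = 1" and ij: "i \<in> idx D n" "j \<in> idx D n"
  shows "(\<Sum>k\<in>idx D n. pattern_op psi n T i k * pattern_op psi n T k j) = pattern_op psi n T i j"
proof -
  let ?R = "\<lambda>t. if t \<in> T then proj_compl psi else proj psi"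
  have "(\<Sum>k\<in>idx D n. pattern_op psi n T i k * pattern_op psi n T k j)
      = (\<Prod>t<n. \<Sum>c<D. ?R t (i ! t) c * ?R t c (j ! t))"
    unfolding pattern_op_def prod.distrib[symmetric] by (rule sum_idx_prod)
  also have "\<dots> = pattern_op psi n T i j"
    unfolding pattern_op_def
    using proj_idem[OF nrm] proj_compl_idem[OF nrm] idx_nth_less[OF ij(1)] idx_nth_less[OF ij(2)]
    by (intro prod.cong) auto
  finally show ?thesis .
qed

lemma pattern_op_cnj: "cnj (pattern_op psi n T i j) = pattern_op psi n T j i"
  unfolding pattern_op_def cnj_prod
  by (rule prod.cong) (auto simp: proj_compl_def proj_def kdelta_def mult.commute)

text \<open>\<open>tr(E rho) = \<Sum>k <e_k|E rho E|e_k>\<close> for the orthogonal projector \<open>E\<close>.\<close>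

lemma pattern_weight_nonneg:
  assumes dens: "density_op D n rho" and nrm: "(\<Sum>c<D. psi c * cnj (psi c)) = 1"
  shows "0 \<le> pattern_weight D n psi rho T"
proof -
  let ?E = "pattern_op psi n T"
  let ?I = "idx D n"
  have "trprod D n ?E rho = (\<Sum>i\<in>?I. \<Sum>j\<in>?I. (\<Sum>k\<in>?I. ?E i k * cnj (?E j k)) * rho j i)"
    unfolding trprod_def pattern_op_cnj using pattern_op_idem[OF nrm] by simp
  also have "\<dots> = (\<Sum>i\<in>?I. \<Sum>k\<in>?I. \<Sum>j\<in>?I. ?E i k * cnj (?E j k) * rho j i)"
    by (simp add: sum_distrib_right) (intro sum.cong refl sum.swap)
  also have "\<dots> = (\<Sum>k\<in>?I. \<Sum>i\<in>?I. \<Sum>j\<in>?I. ?E i k * cnj (?E j k) * rho j i)"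
    by (rule sum.swap)
  also have "\<dots> = (\<Sum>k\<in>?I. \<Sum>j\<in>?I. \<Sum>i\<in>?I. cnj (?E j k) * rho j i * ?E i k)"
    by (rule sum.cong[OF refl]) (subst sum.swap, simp add: ac_simps)
  finally have "pattern_weight D n psi rho T
      = (\<Sum>k\<in>?I. Re (\<Sum>j\<in>?I. \<Sum>i\<in>?I. cnj (?E j k) * rho j i * ?E i k))"
    unfolding pattern_weight_def by (simp add: Re_sum)
  also have "\<dots> \<ge> 0"
  proof (rule sum_nonneg)
    fix k
    have "\<forall>v. 0 \<le> Re (\<Sum>i\<in>?I. \<Sum>j\<in>?I. cnj (v i) * rho i j * v j)"
      using dens unfolding density_op_def by blast
    then show "0 \<le> Re (\<Sum>j\<in>?I. \<Sum>i\<in>?I. cnj (?E j k) * rho j i * ?E i k)"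
      by (rule allE[of _ "\<lambda>x. ?E x k"])
  qed
  finally show ?thesis .
qed

text \<open>The coefficient of \<open>1 - |Psi><Psi|\<close> on factor \<open>t\<close> when factor \<open>s\<close> carries
  \<open>|Psi><Psi| + x (1 - |Psi><Psi|)\<close> and all other factors carry \<open>Omega\<close>: \<open>x = 1\<close> gives the
  identity (for \<open>p\<close>), \<open>x = 0\<close> the projector (for \<open>f\<close>).\<close>

definition target_coeff :: "real \<Rightarrow> real \<Rightarrow> nat \<Rightarrow> nat \<Rightarrow> real" where
  "target_coeff x lam s t = (if t = s then x else lam)"

lemma trprod_tensorOp_Omega:
  "Re (trprod D (Suc N)
      (tensorOp N (Omega psi lam) (\<lambda>a b. proj psi a b + of_real x * proj_compl psi a b)) rho)
    = (\<Sum>T\<in>Pow {..<Suc N}. (\<Prod>t\<in>T. target_coeff x lam N t) * pattern_weight D (Suc N) psi rho T)"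
proof -
  have "tensorOp N (Omega psi lam) (\<lambda>a b. proj psi a b + of_real x * proj_compl psi a b)
      = (\<lambda>i j. \<Prod>t<Suc N. proj psi (i ! t) (j ! t)
                + of_real (target_coeff x lam N t) * proj_compl psi (i ! t) (j ! t))"
    unfolding tensorOp_def Omega_def proj_compl_def target_coeff_def
    by (intro ext) (simp add: prod.lessThan_Suc)
  then show ?thesis by (simp only: trprod_prod_proj_add_proj_compl)
qed

section \<open>Permutation invariance\<close>

lemma permute_idx_length [simp]: "length (permute_idx s xs) = length xs"
  by (simp add: permute_idx_def)

lemma permute_idx_nth [simp]: "t < length xs \<Longrightarrow> permute_idx s xs ! t = xs ! s t"
  by (simp add: permute_idx_def)

lemma permute_idx_in_idx:
  assumes s: "s permutes {..<n}" and xs: "xs \<in> idx D n"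
  shows "permute_idx s xs \<in> idx D n"
proof -
  have len: "length xs = n" using xs by (simp add: idx_def)
  have "permute_idx s xs ! t < D" if "t < n" for t
    using idx_nth_less[OF xs] permutes_in_image[OF s] that len by simp
  then have "set (permute_idx s xs) \<subseteq> {..<D}"
    using len by (auto simp: in_set_conv_nth)
  then show ?thesis using len by (simp add: idx_def)
qed

lemma permute_idx_comp:
  assumes s: "s permutes {..<n}" and len: "length xs = n"
  shows "permute_idx s (permute_idx r xs) = permute_idx (r \<circ> s) xs"
proof (rule nth_equalityI)
  fix t assume "t < length (permute_idx s (permute_idx r xs))"
  then have t: "t < n" using len by simp
  then have "s t < n" using permutes_in_image[OF s] by simp
  then show "permute_idx s (permute_idx r xs) ! t = permute_idx (r \<circ> s) xs ! t"
    using t len by simp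
qed simp

lemma permute_idx_id: "permute_idx id xs = xs"
  by (simp add: permute_idx_def map_nth)

lemma bij_betw_permute_idx:
  assumes s: "s permutes {..<n}"
  shows "bij_betw (permute_idx s) (idx D n) (idx D n)"
proof (rule bij_betwI[where g = "permute_idx (inv s)"])
  have si: "inv s permutes {..<n}" using permutes_inv[OF s] .
  show "permute_idx s \<in> idx D n \<rightarrow> idx D n" using permute_idx_in_idx[OF s] by blast
  show "permute_idx (inv s) \<in> idx D n \<rightarrow> idx D n" using permute_idx_in_idx[OF si] by blast
  show "permute_idx (inv s) (permute_idx s x) = x" if "x \<in> idx D n" for x
    using that permute_idx_comp[OF si, of x s] permutes_inv_o(1)[OF s]
    by (simp add: idx_def permute_idx_id)
  show "permute_idx s (permute_idx (inv s) y) = y" if "y \<in> idx D n" for y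
    using that permute_idx_comp[OF s, of y "inv s"] permutes_inv_o(2)[OF s]
    by (simp add: idx_def permute_idx_id)
qed

lemma prod_if_permute:
  assumes s: "s permutes {..<n}"
  shows "(\<Prod>t<n. if t \<in> T then F (s t) else G (s t))
       = (\<Prod>t<n. if t \<in> s ` T then F t else (G t :: 'a::comm_monoid_mult))"
proof -
  have "(\<Prod>t<n. if t \<in> s ` T then F t else G t)
      = (\<Prod>t<n. if s t \<in> s ` T then F (s t) else G (s t))"
    using prod.permute[OF s, of "\<lambda>t. if t \<in> s ` T then F t else G t"] by (simp add: comp_def)
  also have "\<dots> = (\<Prod>t<n. if t \<in> T then F (s t) else G (s t))"
    using permutes_inj[OF s] by (simp add: inj_image_mem_iff)
  finally show ?thesis by simp
qed

lemma pattern_op_permute_idx: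
  assumes s: "s permutes {..<n}" and i: "i \<in> idx D n" and j: "j \<in> idx D n"
  shows "pattern_op psi n T (permute_idx s i) (permute_idx s j) = pattern_op psi n (s ` T) i j"
proof -
  have "length i = n" "length j = n" using i j by (auto simp: idx_def)
  then have "pattern_op psi n T (permute_idx s i) (permute_idx s j)
      = (\<Prod>t<n. if t \<in> T then proj_compl psi (i ! s t) (j ! s t) else proj psi (i ! s t) (j ! s t))"
    unfolding pattern_op_def by (intro prod.cong) auto
  also have "\<dots> = (\<Prod>t<n. if t \<in> s ` T then proj_compl psi (i ! t) (j ! t)
      else proj psi (i ! t) (j ! t))"
    by (rule prod_if_permute[OF s, where F = "\<lambda>t. proj_compl psi (i ! t) (j ! t)"
          and G = "\<lambda>t. proj psi (i ! t) (j ! t)"])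
  also have "\<dots> = pattern_op psi n (s ` T) i j"
    unfolding pattern_op_def by (intro prod.cong) auto
  finally show ?thesis .
qed

lemma pattern_weight_permute:
  assumes s: "s permutes {..<n}" and inv: "perm_inv D n rho"
  shows "pattern_weight D n psi rho (s ` T) = pattern_weight D n psi rho T"
proof -
  let ?p = "permute_idx s"
  have bij: "bij_betw ?p (idx D n) (idx D n)" by (rule bij_betw_permute_idx[OF s])
  have "trprod D n (pattern_op psi n T) rho
      = (\<Sum>i\<in>idx D n. \<Sum>j\<in>idx D n. pattern_op psi n T (?p i) (?p j) * rho (?p j) (?p i))"
    unfolding trprod_def
    by (subst sum.reindex_bij_betw[OF bij, symmetric], rule sum.cong[OF refl],
        rule sum.reindex_bij_betw[OF bij, symmetric])
  also have "\<dots> = trprod D n (pattern_op psi n (s ` T)) rho"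
    unfolding trprod_def using inv s
    by (intro sum.cong refl) (simp add: pattern_op_permute_idx perm_inv_def)
  finally show ?thesis unfolding pattern_weight_def by simp
qed

text \<open>Transposing the target \<open>s0\<close> with any other factor \<open>s\<close> does not change a sum of the form
  below, so the sum at \<open>s0\<close> equals the average over all targets.\<close>

lemma sum_Pow_average_target:
  fixes w :: "nat set \<Rightarrow> real" and G :: "nat \<Rightarrow> nat set \<Rightarrow> real"
  assumes w: "\<And>r T. r permutes {..<n} \<Longrightarrow> w (r ` T) = w T"
    and s0: "s0 < n"
    and G: "\<And>s T. s < n \<Longrightarrow> G s0 (transpose s s0 ` T) = G s T"
  shows "real n * (\<Sum>T\<in>Pow {..<n}. w T * G s0 T) = (\<Sum>T\<in>Pow {..<n}. w T * (\<Sum>s<n. G s T))"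
proof -
  have each: "(\<Sum>T\<in>Pow {..<n}. w T * G s T) = (\<Sum>T\<in>Pow {..<n}. w T * G s0 T)" if s: "s < n" for s
  proof -
    let ?r = "transpose s s0"
    have r: "?r permutes {..<n}" using s s0 by (intro permutes_swap_id) auto
    have "(\<Sum>T\<in>Pow {..<n}. w T * G s T) = (\<Sum>T\<in>Pow {..<n}. w (?r ` T) * G s0 (?r ` T))"
      by (rule sum.cong[OF refl]) (simp add: w[OF r] G[OF s])
    also have "\<dots> = (\<Sum>T\<in>Pow {..<n}. w T * G s0 T)"
      using bij_betw_image_Pow[OF permutes_imp_bij[OF r]]
      by (rule sum.reindex_bij_betw)
    finally show ?thesis .
  qed
  have "(\<Sum>T\<in>Pow {..<n}. w T * (\<Sum>s<n. G s T)) = (\<Sum>s<n. \<Sum>T\<in>Pow {..<n}. w T * G s T)"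
    by (simp add: sum_distrib_left sum.swap[of _ "Pow {..<n}"])
  also have "\<dots> = real n * (\<Sum>T\<in>Pow {..<n}. w T * G s0 T)"
    by (simp add: each)
  finally show ?thesis by simp
qed

definition target_count :: "nat \<Rightarrow> real \<Rightarrow> real \<Rightarrow> nat \<Rightarrow> real" where
  "target_count n x lam k = real k * x * lam ^ (k - 1) + real (n - k) * lam ^ k"

lemma sum_prod_target_coeff:
  assumes T: "T \<subseteq> {..<n}"
  shows "(\<Sum>s<n. \<Prod>t\<in>T. target_coeff x lam s t) = target_count n x lam (card T)"
proof -
  have fin: "finite T" using T finite_subset by blast
  have "(\<Prod>t\<in>T. target_coeff x lam s t) = (if s \<in> T then x * lam ^ (card T - 1) else lam ^ card T)"
    for s using prod_gen_delta[OF fin, of s "\<lambda>_. x" lam] by (simp add: target_coeff_def)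
  then have "(\<Sum>s<n. \<Prod>t\<in>T. target_coeff x lam s t)
      = (\<Sum>s<n. if s \<in> T then x * lam ^ (card T - 1) else lam ^ card T)"
    by simp
  also have "\<dots> = (\<Sum>s\<in>T. x * lam ^ (card T - 1)) + (\<Sum>s\<in>{..<n} - T. lam ^ card T)"
    using T by (simp add: sum.If_cases Int_absorb1 Diff_eq)
  also have "\<dots> = target_count n x lam (card T)"
    using T fin by (simp add: card_Diff_subset target_count_def)
  finally show ?thesis .
qed

lemma trprod_tensorOp_Omega_count:
  assumes "perm_inv D (Suc N) rho"
  shows "real (Suc N) * Re (trprod D (Suc N)
      (tensorOp N (Omega psi lam) (\<lambda>a b. proj psi a b + of_real x * proj_compl psi a b)) rho)
    = (\<Sum>T\<in>Pow {..<Suc N}. pattern_weight D (Suc N) psi rho T * target_count (Suc N) x lam (card T))"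
proof -
  let ?w = "pattern_weight D (Suc N) psi rho"
  have "transpose s N t = N \<longleftrightarrow> t = s" for s t
    by (auto simp: transpose_eq_iff)
  then have "(\<Prod>t\<in>transpose s N ` T. target_coeff x lam N t) = (\<Prod>t\<in>T. target_coeff x lam s t)"
    for s T by (subst prod.reindex) (simp_all add: target_coeff_def)
  then have "real (Suc N) * (\<Sum>T\<in>Pow {..<Suc N}. ?w T * (\<Prod>t\<in>T. target_coeff x lam N t))
      = (\<Sum>T\<in>Pow {..<Suc N}. ?w T * (\<Sum>s<Suc N. \<Prod>t\<in>T. target_coeff x lam s t))"
    using pattern_weight_permute[OF _ assms] by (intro sum_Pow_average_target) auto
  also have "\<dots> = (\<Sum>T\<in>Pow {..<Suc N}. ?w T * target_count (Suc N) x lam (card T))"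
    by (rule sum.cong[OF refl]) (simp only: Pow_iff sum_prod_target_coeff)
  finally show ?thesis
    unfolding trprod_tensorOp_Omega by (simp only: mult.commute)
qed

lemma pval_count:
  assumes "perm_inv D (Suc N) rho"
  shows "real (Suc N) * pval D N psi lam rho
    = (\<Sum>T\<in>Pow {..<Suc N}. pattern_weight D (Suc N) psi rho T * target_count (Suc N) 1 lam (card T))"
  using trprod_tensorOp_Omega_count[OF assms, of psi lam 1]
  unfolding pval_def Suc_eq_plus1[symmetric] by (simp add: proj_compl_def)

lemma fval_count:
  assumes "perm_inv D (Suc N) rho"
  shows "real (Suc N) * fval D N psi lam rho
    = (\<Sum>T\<in>Pow {..<Suc N}. pattern_weight D (Suc N) psi rho T * target_count (Suc N) 0 lam (card T))"
  using trprod_tensorOp_Omega_count[OF assms, of psi lam 0]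
  unfolding fval_def Suc_eq_plus1[symmetric] by simp

section \<open>The lower bound\<close>

definition zeta_k_denom :: "nat \<Rightarrow> real \<Rightarrow> nat \<Rightarrow> real" where
  "zeta_k_denom N lam m = (1 - lam) * (real m * (1 - lam) + real N * lam)"

definition zeta_k_slope :: "nat \<Rightarrow> real \<Rightarrow> nat \<Rightarrow> real" where
  "zeta_k_slope N lam m = lam * (1 + (real N - real m) * (1 - lam)) / zeta_k_denom N lam m"

definition zeta_k_offset :: "nat \<Rightarrow> real \<Rightarrow> nat \<Rightarrow> real" where
  "zeta_k_offset N lam m = - (lam ^ (m + 1)) / zeta_k_denom N lam m"

lemma zeta_k_denom_pos:
  assumes "0 < lam" "lam < 1" "1 \<le> N"
  shows "0 < zeta_k_denom N lam m"
  using assms unfolding zeta_k_denom_def by (intro mult_pos_pos add_nonneg_pos) auto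

lemma zeta_k_affine:
  assumes "0 < lam" "lam < 1" "1 \<le> N"
  shows "zeta_k N delta lam m = zeta_k_offset N lam m + zeta_k_slope N lam m * delta"
proof -
  have "zeta_k N delta lam m
      = (lam * (1 + (real N - real m) * (1 - lam)) * delta - lam ^ (m + 1)) / zeta_k_denom N lam m"
    unfolding zeta_k_def zeta_k_denom_def
    by (rule arg_cong2[where f = "(/)"]) (simp_all add: algebra_simps)
  also have "\<dots> = zeta_k_offset N lam m + zeta_k_slope N lam m * delta"
    using zeta_k_denom_pos[OF assms, of m] unfolding zeta_k_offset_def zeta_k_slope_def
    by (simp add: field_simps)
  finally show ?thesis .
qed

lemma zeta_k_slope_nonneg:
  assumes "0 < lam" "lam < 1" "1 \<le> N" "m \<le> N"
  shows "0 \<le> zeta_k_slope N lam m"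
  using assms zeta_k_denom_pos[OF assms(1-3), of m] unfolding zeta_k_slope_def
  by (intro divide_nonneg_pos mult_nonneg_nonneg) auto

lemma zeta_k_offset_nonpos:
  assumes "0 < lam" "lam < 1" "1 \<le> N"
  shows "zeta_k_offset N lam m \<le> 0"
  using assms zeta_k_denom_pos[OF assms, of m] unfolding zeta_k_offset_def by simp

text \<open>Bernoulli's inequality \<open>(1 - \<nu>)^j \<ge> 1 - j \<nu>\<close> for the integer \<open>j = m + 1 - k\<close>, of
  either sign.\<close>

lemma power_Bernoulli_shift:
  fixes lam :: real
  assumes l0: "0 < lam" and l1: "lam < 1"
  shows "lam ^ k * (lam + (1 - lam) * (real k - real m)) \<le> lam ^ (m + 1)"
proof (cases "k \<le> m")
  case True
  define i where "i = m - k"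
  have m: "m = k + i" using True i_def by simp
  have "1 + real (i + 1) * (- (1 - lam)) \<le> (1 + (- (1 - lam))) ^ (i + 1)"
    by (rule Bernoulli_inequality) (use l0 l1 in simp)
  then have "lam + (1 - lam) * (real k - real m) \<le> lam ^ (i + 1)"
    by (simp add: m algebra_simps)
  then have "lam ^ k * (lam + (1 - lam) * (real k - real m)) \<le> lam ^ k * lam ^ (i + 1)"
    by (rule mult_left_mono) (use l0 in simp)
  also have "\<dots> = lam ^ (m + 1)" by (simp add: m power_add)
  finally show ?thesis .
next
  case False
  define i where "i = k - (m + 1)"
  have k: "k = m + 1 + i" using False i_def by simp
  have "lam ^ i * (1 + real i * (1 - lam)) \<le> lam ^ i * (1 + (1 - lam)) ^ i"
    by (intro mult_left_mono Bernoulli_inequality) (use l0 l1 in simp_all)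
  also have "\<dots> = (lam * (2 - lam)) ^ i" by (simp add: power_mult_distrib)
  also have "\<dots> \<le> 1"
  proof (rule power_le_one)
    have "0 \<le> (1 - lam)\<^sup>2" by simp
    then show "lam * (2 - lam) \<le> 1" by (simp add: power2_eq_square algebra_simps)
  qed (use l0 l1 in simp)
  finally have "lam ^ i * (1 + real i * (1 - lam)) \<le> 1" .
  then have "lam ^ (m + 1) * (lam ^ i * (1 + real i * (1 - lam))) \<le> lam ^ (m + 1)"
    using l0 by (simp add: mult_left_le)
  then show ?thesis by (simp add: k power_add algebra_simps)
qed

lemma target_count_gap_eq:
  assumes l0: "0 < lam" and l1: "lam < 1" and N: "1 \<le> N" and k: "k \<le> Suc N"
  shows "target_count (Suc N) 0 lam k - zeta_k_slope N lam m * target_count (Suc N) 1 lam k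
      - real (Suc N) * zeta_k_offset N lam m
    = real (Suc N) * (lam ^ (m + 1) - lam ^ k * (lam + (1 - lam) * (real k - real m)))
      / zeta_k_denom N lam m"
proof -
  have D: "0 < zeta_k_denom N lam m" by (rule zeta_k_denom_pos[OF l0 l1 N])
  have g: "target_count (Suc N) 1 lam k = lam ^ k * ((real N + 1 - real k) * lam + real k) / lam"
    using k l0 by (cases k) (simp_all add: target_count_def of_nat_diff field_simps)
  have h: "target_count (Suc N) 0 lam k = (real N + 1 - real k) * lam ^ k"
    using k by (simp add: target_count_def of_nat_diff)
  have poly: "zeta_k_denom N lam m * (real N + 1 - real k)
      - (1 + (real N - real m) * (1 - lam)) * ((real N + 1 - real k) * lam + real k)
      = - (real N + 1) * (lam + (1 - lam) * (real k - real m))"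
    unfolding zeta_k_denom_def by (simp add: algebra_simps)
  have "(target_count (Suc N) 0 lam k - zeta_k_slope N lam m * target_count (Suc N) 1 lam k
        - real (Suc N) * zeta_k_offset N lam m) * zeta_k_denom N lam m
      = lam ^ k * (zeta_k_denom N lam m * (real N + 1 - real k)
          - (1 + (real N - real m) * (1 - lam)) * ((real N + 1 - real k) * lam + real k))
        + (real N + 1) * lam ^ (m + 1)"
    unfolding g h zeta_k_slope_def zeta_k_offset_def using D l0 by (simp add: field_simps)
  also have "\<dots> = real (Suc N) * (lam ^ (m + 1) - lam ^ k * (lam + (1 - lam) * (real k - real m)))"
    unfolding poly by (simp add: algebra_simps)
  finally show ?thesis using D by (simp add: field_simps)
qed

lemma target_count_touching:
  assumes "0 < lam" "lam < 1" "1 \<le> N" "k \<le> Suc N" and "k = m \<or> k = m + 1"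
  shows "target_count (Suc N) 0 lam k
    = zeta_k_slope N lam m * target_count (Suc N) 1 lam k + real (Suc N) * zeta_k_offset N lam m"
  using target_count_gap_eq[OF assms(1-4), of m] assms(5) by (auto simp: algebra_simps)

lemma fval_ge_zeta_k:
  assumes dens: "density_op D (Suc N) rho" and inv: "perm_inv D (Suc N) rho"
    and nrm: "(\<Sum>c<D. psi c * cnj (psi c)) = 1"
    and l0: "0 < lam" and l1: "lam < 1" and N: "1 \<le> N"
  shows "zeta_k N (pval D N psi lam rho) lam m \<le> fval D N psi lam rho"
proof -
  let ?w = "pattern_weight D (Suc N) psi rho"
  let ?a = "zeta_k_offset N lam m" and ?b = "zeta_k_slope N lam m"
  let ?gap = "\<lambda>k. target_count (Suc N) 0 lam k - ?b * target_count (Suc N) 1 lam k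
    - real (Suc N) * ?a"
  have "real (Suc N) * (fval D N psi lam rho - ?b * pval D N psi lam rho - ?a)
      = real (Suc N) * fval D N psi lam rho - ?b * (real (Suc N) * pval D N psi lam rho)
        - real (Suc N) * ?a * (\<Sum>T\<in>Pow {..<Suc N}. ?w T)"
    unfolding sum_pattern_weight[OF dens] by (simp add: algebra_simps)
  also have "\<dots> = (\<Sum>T\<in>Pow {..<Suc N}. ?w T * ?gap (card T))"
    unfolding fval_count[OF inv] pval_count[OF inv]
    by (simp add: right_diff_distrib sum_subtractf sum_distrib_left mult_ac)
  also have "\<dots> \<ge> 0"
  proof (intro sum_nonneg mult_nonneg_nonneg)
    fix T assume "T \<in> Pow {..<Suc N}"
    then have "card T \<le> Suc N" using card_mono[of "{..<Suc N}" T] by simp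
    then have "?gap (card T) = real (Suc N)
        * (lam ^ (m + 1) - lam ^ card T * (lam + (1 - lam) * (real (card T) - real m)))
        / zeta_k_denom N lam m"
      by (rule target_count_gap_eq[OF l0 l1 N])
    then show "0 \<le> ?gap (card T)"
      using power_Bernoulli_shift[OF l0 l1, of "card T" m] zeta_k_denom_pos[OF l0 l1 N, of m]
      by simp
  qed (rule pattern_weight_nonneg[OF dens nrm])
  finally show ?thesis
    unfolding zeta_k_affine[OF l0 l1 N] by (simp add: zero_le_mult_iff)
qed

section \<open>States attaining the bound\<close>

definition product_vec ::
    "(nat \<Rightarrow> complex) \<Rightarrow> (nat \<Rightarrow> complex) \<Rightarrow> nat \<Rightarrow> nat set \<Rightarrow> nat list \<Rightarrow> complex" where
  "product_vec psi phi n S i = (\<Prod>t<n. (if t \<in> S then phi else psi) (i ! t))"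

definition mixed_state :: "(nat \<Rightarrow> complex) \<Rightarrow> (nat \<Rightarrow> complex) \<Rightarrow> nat \<Rightarrow> (nat set \<Rightarrow> real)
    \<Rightarrow> nat list \<Rightarrow> nat list \<Rightarrow> complex" where
  "mixed_state psi phi n c i j =
     (\<Sum>S\<in>Pow {..<n}. of_real (c S) * product_vec psi phi n S i * cnj (product_vec psi phi n S j))"

lemma mixed_state_psd:
  assumes c: "\<And>S. 0 \<le> c S"
  shows "0 \<le> Re (\<Sum>i\<in>idx D n. \<Sum>j\<in>idx D n. cnj (v i) * mixed_state psi phi n c i j * v j)"
proof -
  let ?z = "\<lambda>S. \<Sum>i\<in>idx D n. cnj (v i) * product_vec psi phi n S i"
  have "(\<Sum>i\<in>idx D n. \<Sum>j\<in>idx D n. cnj (v i) * mixed_state psi phi n c i j * v j)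
      = (\<Sum>S\<in>Pow {..<n}. of_real (c S) * (?z S * cnj (?z S)))"
    unfolding mixed_state_def
    by (simp add: sum_distrib_left sum_distrib_right sum.swap[of _ "Pow {..<n}"] ac_simps)
  also have "\<dots> = of_real (\<Sum>S\<in>Pow {..<n}. c S * (cmod (?z S))\<^sup>2)"
    unfolding of_real_sum
    by (intro sum.cong refl) (simp only: complex_norm_square[symmetric] of_real_mult)
  finally show ?thesis using c by (simp add: sum_nonneg)
qed

lemma sum_product_vec_norm:
  assumes "(\<Sum>a<D. psi a * cnj (psi a)) = 1" and "(\<Sum>a<D. phi a * cnj (phi a)) = 1"
  shows "(\<Sum>i\<in>idx D n. product_vec psi phi n S i * cnj (product_vec psi phi n S i)) = 1"
proof -
  have "(\<Sum>i\<in>idx D n. product_vec psi phi n S i * cnj (product_vec psi phi n S i))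
     = (\<Prod>t<n. \<Sum>a<D. (if t \<in> S then phi else psi) a * cnj ((if t \<in> S then phi else psi) a))"
    unfolding product_vec_def cnj_prod prod.distrib[symmetric] by (rule sum_idx_prod)
  also have "\<dots> = 1" using assms by (intro prod.neutral) simp
  finally show ?thesis .
qed

lemma mixed_state_density_op:
  assumes "(\<Sum>a<D. psi a * cnj (psi a)) = 1" and "(\<Sum>a<D. phi a * cnj (phi a)) = 1"
    and c: "\<And>S. 0 \<le> c S" and "(\<Sum>S\<in>Pow {..<n}. c S) = 1"
  shows "density_op D n (mixed_state psi phi n c)"
  unfolding density_op_def
proof (intro conjI ballI allI)
  fix i j show "mixed_state psi phi n c i j = cnj (mixed_state psi phi n c j i)"
    unfolding mixed_state_def by (simp add: ac_simps)
next
  fix v :: "nat list \<Rightarrow> complex"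
  show "0 \<le> Re (\<Sum>i\<in>idx D n. \<Sum>j\<in>idx D n. cnj (v i) * mixed_state psi phi n c i j * v j)"
    by (rule mixed_state_psd[OF c])
next
  have "(\<Sum>i\<in>idx D n. mixed_state psi phi n c i i)
      = (\<Sum>S\<in>Pow {..<n}. of_real (c S)
          * (\<Sum>i\<in>idx D n. product_vec psi phi n S i * cnj (product_vec psi phi n S i)))"
    unfolding mixed_state_def by (simp add: sum_distrib_left sum.swap[of _ "Pow {..<n}"] ac_simps)
  then show "(\<Sum>i\<in>idx D n. mixed_state psi phi n c i i) = 1"
    using assms by (simp add: sum_product_vec_norm flip: of_real_sum)
qed

lemma product_vec_permute_idx:
  assumes s: "s permutes {..<n}" and i: "i \<in> idx D n"
  shows "product_vec psi phi n S (permute_idx s i) = product_vec psi phi n (s ` S) i"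
proof -
  have "length i = n" using i by (auto simp: idx_def)
  then have "product_vec psi phi n S (permute_idx s i)
      = (\<Prod>t<n. if t \<in> S then phi (i ! s t) else psi (i ! s t))"
    unfolding product_vec_def by (intro prod.cong) auto
  also have "\<dots> = (\<Prod>t<n. if t \<in> s ` S then phi (i ! t) else psi (i ! t))"
    by (rule prod_if_permute[OF s, where F = "\<lambda>t. phi (i ! t)" and G = "\<lambda>t. psi (i ! t)"])
  also have "\<dots> = product_vec psi phi n (s ` S) i"
    unfolding product_vec_def by (intro prod.cong) auto
  finally show ?thesis .
qed

lemma mixed_state_perm_inv:
  assumes c: "\<And>s S. s permutes {..<n} \<Longrightarrow> c (s ` S) = c S"
  shows "perm_inv D n (mixed_state psi phi n c)"
  unfolding perm_inv_def
proof (intro allI impI ballI)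
  fix s i j assume s: "s permutes {..<n}" and i: "i \<in> idx D n" and j: "j \<in> idx D n"
  let ?g = "\<lambda>S. of_real (c S) * product_vec psi phi n S i * cnj (product_vec psi phi n S j)"
  have "mixed_state psi phi n c (permute_idx s i) (permute_idx s j) = (\<Sum>S\<in>Pow {..<n}. ?g (s ` S))"
    unfolding mixed_state_def
    by (simp add: product_vec_permute_idx[OF s i] product_vec_permute_idx[OF s j] c[OF s])
  also have "\<dots> = mixed_state psi phi n c i j"
    unfolding mixed_state_def
    using bij_betw_image_Pow[OF permutes_imp_bij[OF s]] by (rule sum.reindex_bij_betw)
  finally show "mixed_state psi phi n c (permute_idx s i) (permute_idx s j)
    = mixed_state psi phi n c i j" .
qed

lemma quadratic_form_proj:
  "(\<Sum>a<D. \<Sum>b<D. proj psi a b * x b * cnj (x a))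
     = (\<Sum>a<D. cnj (x a) * psi a) * (\<Sum>b<D. cnj (psi b) * x b)"
  unfolding sum_product proj_def by (intro sum.cong refl) (simp add: ac_simps)

lemma quadratic_form_kdelta:
  "(\<Sum>a<D. \<Sum>b<D. kdelta a b * x b * cnj (x a)) = (\<Sum>a<D. x a * cnj (x a))"
  by (intro sum.cong refl) (simp add: kdelta_sum_left mult.assoc)

lemma quadratic_form_factor:
  assumes psi: "(\<Sum>a<D. psi a * cnj (psi a)) = 1" and phi: "(\<Sum>a<D. phi a * cnj (phi a)) = 1"
    and orth: "(\<Sum>a<D. cnj (phi a) * psi a) = 0"
  shows "(\<Sum>a<D. \<Sum>b<D. (if t \<in> T then proj_compl psi else proj psi) a b
          * (if t \<in> S then phi else psi) b * cnj ((if t \<in> S then phi else psi) a))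
       = (if (t \<in> T) = (t \<in> S) then 1 else 0)"
proof -
  have "(\<Sum>b<D. cnj (psi b) * phi b) = cnj (\<Sum>a<D. cnj (phi a) * psi a)"
    by (simp add: mult.commute)
  then have orth': "(\<Sum>b<D. cnj (psi b) * phi b) = 0" using orth by simp
  have psi': "(\<Sum>a<D. cnj (psi a) * psi a) = 1" using psi by (simp add: mult.commute)
  have "(\<Sum>a<D. \<Sum>b<D. proj_compl psi a b * x b * cnj (x a))
      = (\<Sum>a<D. \<Sum>b<D. kdelta a b * x b * cnj (x a)) - (\<Sum>a<D. \<Sum>b<D. proj psi a b * x b * cnj (x a))"
    for x unfolding proj_compl_def by (simp add: algebra_simps sum_subtractf)
  then show ?thesis
    using psi phi
    by (cases "t \<in> T"; cases "t \<in> S")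
      (simp_all add: quadratic_form_proj quadratic_form_kdelta psi' orth orth')
qed

lemma pattern_weight_mixed_state:
  assumes psi: "(\<Sum>a<D. psi a * cnj (psi a)) = 1" and phi: "(\<Sum>a<D. phi a * cnj (phi a)) = 1"
    and orth: "(\<Sum>a<D. cnj (phi a) * psi a) = 0" and T: "T \<subseteq> {..<n}"
  shows "pattern_weight D n psi (mixed_state psi phi n c) T = c T"
proof -
  have overlap: "(\<Sum>i\<in>idx D n. \<Sum>j\<in>idx D n.
        pattern_op psi n T i j * (product_vec psi phi n S j * cnj (product_vec psi phi n S i)))
      = (if S = T then 1 else 0)" if S: "S \<subseteq> {..<n}" for S
  proof -
    have "(\<Sum>i\<in>idx D n. \<Sum>j\<in>idx D n.
          pattern_op psi n T i j * (product_vec psi phi n S j * cnj (product_vec psi phi n S i)))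
        = (\<Sum>i\<in>idx D n. \<Sum>j\<in>idx D n. \<Prod>t<n.
            (if t \<in> T then proj_compl psi else proj psi) (i ! t) (j ! t)
            * (if t \<in> S then phi else psi) (j ! t) * cnj ((if t \<in> S then phi else psi) (i ! t)))"
      unfolding pattern_op_def product_vec_def cnj_prod by (simp add: prod.distrib mult.assoc)
    also have "\<dots> = (\<Prod>t<n. \<Sum>a<D. \<Sum>b<D. (if t \<in> T then proj_compl psi else proj psi) a b
            * (if t \<in> S then phi else psi) b * cnj ((if t \<in> S then phi else psi) a))"
      by (rule sum2_idx_prod)
    also have "\<dots> = (\<Prod>t<n. if (t \<in> T) = (t \<in> S) then 1 else 0)"
      by (simp only: quadratic_form_factor[OF psi phi orth])
    also have "\<dots> = (if S = T then 1 else 0)"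
      using S T by (auto intro!: prod_zero)
    finally show ?thesis .
  qed
  have "trprod D n (pattern_op psi n T) (mixed_state psi phi n c)
      = (\<Sum>S\<in>Pow {..<n}. of_real (c S) * (\<Sum>i\<in>idx D n. \<Sum>j\<in>idx D n.
          pattern_op psi n T i j * (product_vec psi phi n S j * cnj (product_vec psi phi n S i))))"
    unfolding trprod_def mixed_state_def
    by (simp add: sum_distrib_left sum.swap[of _ "Pow {..<n}"] ac_simps)
  also have "\<dots> = (\<Sum>S\<in>Pow {..<n}. if S = T then of_real (c S) else 0)"
    by (intro sum.cong refl) (simp add: overlap)
  also have "\<dots> = of_real (c T)"
    using T by simp
  finally show ?thesis unfolding pattern_weight_def by simp
qed

definition layer_weights :: "nat \<Rightarrow> nat \<Rightarrow> real \<Rightarrow> real \<Rightarrow> nat set \<Rightarrow> real" where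
  "layer_weights n m al be T =
     (if card T = m then al / real (n choose m) else 0)
     + (if card T = m + 1 then be / real (n choose (m + 1)) else 0)"

lemma sum_Pow_card_eq:
  fixes G :: "nat \<Rightarrow> real"
  assumes A: "finite A" and k: "k \<le> card A"
  shows "(\<Sum>T\<in>Pow A. (if card T = k then x / real (card A choose k) else 0) * G (card T)) = x * G k"
proof -
  have "(\<Sum>T\<in>Pow A. (if card T = k then x / real (card A choose k) else 0) * G (card T))
      = (\<Sum>T\<in>Pow A. if card T = k then x / real (card A choose k) * G k else 0)"
    by (rule sum.cong) auto
  also have "\<dots> = (\<Sum>T\<in>{T\<in>Pow A. card T = k}. x / real (card A choose k) * G k)"
    by (rule sum.inter_filter[symmetric]) (simp add: A)
  also have "{T\<in>Pow A. card T = k} = {B. B \<subseteq> A \<and> card B = k}" by auto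
  finally show ?thesis
    using k by (simp add: n_subsets[OF A])
qed

lemma sum_layer_weights:
  fixes G :: "nat \<Rightarrow> real"
  assumes "m + 1 \<le> n"
  shows "(\<Sum>T\<in>Pow {..<n}. layer_weights n m al be T * G (card T)) = al * G m + be * G (m + 1)"
  using assms sum_Pow_card_eq[OF finite_lessThan, unfolded card_lessThan, of m n al G]
    sum_Pow_card_eq[OF finite_lessThan, unfolded card_lessThan, of "m + 1" n be G]
  unfolding layer_weights_def distrib_right sum.distrib by simp

lemma sum_supported_01:
  fixes f :: "nat \<Rightarrow> complex"
  assumes "2 \<le> D" and "\<And>a. 2 \<le> a \<Longrightarrow> f a = 0"
  shows "(\<Sum>a<D. f a) = f 0 + f 1"
proof -
  have "(\<Sum>a<D. f a) = (\<Sum>a\<in>{0, 1}. f a)"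
    by (rule sum.mono_neutral_right) (use assms in auto)
  then show ?thesis by simp
qed

lemma exists_unit_orthogonal:
  fixes psi :: "nat \<Rightarrow> complex"
  assumes D: "2 \<le> D"
  obtains phi where "(\<Sum>a<D. phi a * cnj (phi a)) = 1" and "(\<Sum>a<D. cnj (phi a) * psi a) = 0"
proof (cases "psi 0 = 0 \<and> psi 1 = 0")
  case True
  let ?phi = "\<lambda>a::nat. if a = 0 then 1 else 0 :: complex"
  have "(\<Sum>a<D. ?phi a * cnj (?phi a)) = 1" "(\<Sum>a<D. cnj (?phi a) * psi a) = 0"
    using True by (subst sum_supported_01[OF D]; simp)+
  then show ?thesis by (rule that)
next
  case False
  define r where "r = sqrt ((cmod (psi 0))\<^sup>2 + (cmod (psi 1))\<^sup>2)"
  have r: "0 < r" using False unfolding r_def by (auto intro: add_pos_nonneg add_nonneg_pos)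
  have "r * r = (cmod (psi 0))\<^sup>2 + (cmod (psi 1))\<^sup>2"
    unfolding r_def by simp
  then have rr: "psi 0 * cnj (psi 0) + psi 1 * cnj (psi 1) = of_real (r * r)"
    by (simp only: of_real_add complex_norm_square)
  define phi where
    "phi (a::nat) = (if a = 0 then - cnj (psi 1) else if a = 1 then cnj (psi 0) else 0) / of_real r"
    for a
  have "(\<Sum>a<D. phi a * cnj (phi a)) = (psi 0 * cnj (psi 0) + psi 1 * cnj (psi 1)) / of_real (r * r)"
    using r by (subst sum_supported_01[OF D]) (simp_all add: phi_def field_simps)
  moreover have "(\<Sum>a<D. cnj (phi a) * psi a) = 0"
    using r by (subst sum_supported_01[OF D]) (simp_all add: phi_def field_simps)
  ultimately show ?thesis using r rr by (intro that) simp_all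
qed

lemma exists_state_on_layers:
  assumes D: "2 \<le> D" and psi: "(\<Sum>a<D. psi a * cnj (psi a)) = 1"
    and al: "0 \<le> al" and be: "0 \<le> be" and ab: "al + be = 1" and m: "m \<le> N"
  obtains rho where "density_op D (Suc N) rho" and "perm_inv D (Suc N) rho"
    and "real (Suc N) * pval D N psi lam rho
      = al * target_count (Suc N) 1 lam m + be * target_count (Suc N) 1 lam (m + 1)"
    and "real (Suc N) * fval D N psi lam rho
      = al * target_count (Suc N) 0 lam m + be * target_count (Suc N) 0 lam (m + 1)"
proof -
  obtain phi where phi: "(\<Sum>a<D. phi a * cnj (phi a)) = 1"
    and orth: "(\<Sum>a<D. cnj (phi a) * psi a) = 0"
    using exists_unit_orthogonal[OF D] .
  let ?c = "layer_weights (Suc N) m al be"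
  let ?rho = "mixed_state psi phi (Suc N) ?c"
  have m1: "m + 1 \<le> Suc N" using m by simp
  have "(\<Sum>S\<in>Pow {..<Suc N}. ?c S) = 1"
    using sum_layer_weights[OF m1, of al be "\<lambda>_. 1"] ab by simp
  moreover have "0 \<le> ?c S" for S
    using al be by (simp add: layer_weights_def)
  ultimately have dens: "density_op D (Suc N) ?rho"
    by (intro mixed_state_density_op[OF psi phi])
  have "?c (s ` S) = ?c S" if "s permutes {..<Suc N}" for s S
    using that by (simp add: layer_weights_def card_image inj_on_subset[OF permutes_inj])
  then have inv: "perm_inv D (Suc N) ?rho"
    by (intro mixed_state_perm_inv)
  have w: "pattern_weight D (Suc N) psi ?rho T = ?c T" if "T \<in> Pow {..<Suc N}" for T
    using that by (intro pattern_weight_mixed_state[OF psi phi orth]) simp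
  show ?thesis
  proof (rule that[OF dens inv])
    show "real (Suc N) * pval D N psi lam ?rho
      = al * target_count (Suc N) 1 lam m + be * target_count (Suc N) 1 lam (m + 1)"
      unfolding pval_count[OF inv] sum_layer_weights[OF m1, symmetric] by (simp add: w)
    show "real (Suc N) * fval D N psi lam ?rho
      = al * target_count (Suc N) 0 lam m + be * target_count (Suc N) 0 lam (m + 1)"
      unfolding fval_count[OF inv] sum_layer_weights[OF m1, symmetric] by (simp add: w)
  qed
qed

section \<open>The optimum\<close>

lemma convex_combination_between:
  fixes x y z :: real
  assumes "y \<le> z" "z \<le> x" "y < x"
  obtains a b where "0 \<le> a" "0 \<le> b" "a + b = 1" "a * x + b * y = z"
proof
  have d: "x - y \<noteq> 0" using assms by simp
  have "(z - y) / (x - y) + (x - z) / (x - y) = (x - y) / (x - y)"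
    by (simp add: add_divide_distrib[symmetric])
  then show "(z - y) / (x - y) + (x - z) / (x - y) = 1" using d by simp
  have "(z - y) / (x - y) * x + (x - z) / (x - y) * y = ((z - y) * x + (x - z) * y) / (x - y)"
    by (simp add: add_divide_distrib)
  also have "(z - y) * x + (x - z) * y = z * (x - y)" by (simp add: algebra_simps)
  finally show "(z - y) / (x - y) * x + (x - z) / (x - y) * y = z" using d by simp
qed (use assms in simp_all)

lemma kstar_lhs_eq_target_count: "k \<le> Suc N \<Longrightarrow> kstar_lhs N lam k = target_count (Suc N) 1 lam k"
  by (cases k) (auto simp: kstar_lhs_def target_count_def of_nat_diff algebra_simps)

lemma kstar_lhs_le_beyond:
  assumes l0: "0 < lam" and l1: "lam < 1" and k: "Suc N \<le> k"
  shows "kstar_lhs N lam k \<le> (real N + 1) * lam ^ N"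
proof -
  have "(real N + 1 - real k) * lam + real k \<le> (real N + 1) * (lam + (1 - lam) * (real k - real N))"
  proof -
    have "0 \<le> (1 - lam) * real N * (real k - real N - 1)"
      using l1 k by (intro mult_nonneg_nonneg) auto
    then show ?thesis by (simp add: algebra_simps)
  qed
  moreover have "lam * kstar_lhs N lam k = lam ^ k * ((real N + 1 - real k) * lam + real k)"
    using k by (cases k) (auto simp: kstar_lhs_def algebra_simps)
  ultimately have "lam * kstar_lhs N lam k
      \<le> lam ^ k * ((real N + 1) * (lam + (1 - lam) * (real k - real N)))"
    using l0 by (simp add: mult_left_mono)
  also have "\<dots> \<le> (real N + 1) * lam ^ (N + 1)"
    using power_Bernoulli_shift[OF l0 l1, of k N] by (simp add: mult.left_commute)
  finally show ?thesis using l0 by simp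
qed

lemma kstar_greatest:
  assumes l0: "0 < lam" and l1: "lam < 1" and d1: "delta \<le> 1" and dl: "lam ^ N < delta"
  shows "kstar N delta lam \<le> N"
    and "(real N + 1) * delta \<le> kstar_lhs N lam (kstar N delta lam)"
    and "kstar_lhs N lam (kstar N delta lam + 1) < (real N + 1) * delta"
proof -
  let ?P = "\<lambda>k. (real N + 1) * delta \<le> kstar_lhs N lam k"
  have bound: "k \<le> N" if "?P k" for k
  proof (rule ccontr)
    assume "\<not> k \<le> N"
    then have "kstar_lhs N lam k \<le> (real N + 1) * lam ^ N"
      by (intro kstar_lhs_le_beyond[OF l0 l1]) simp
    also have "\<dots> < (real N + 1) * delta" using dl by simp
    finally show False using that by simp
  qed
  have "?P 0" using d1 by (simp add: kstar_lhs_def)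
  then show P: "?P (kstar N delta lam)"
    unfolding kstar_def by (rule GreatestI_nat[where P = ?P, OF _ bound])
  then show "kstar N delta lam \<le> N" by (rule bound)
  have "\<not> ?P (kstar N delta lam + 1)"
    using Greatest_le_nat[where P = ?P, OF _ bound] unfolding kstar_def by fastforce
  then show "kstar_lhs N lam (kstar N delta lam + 1) < (real N + 1) * delta" by simp
qed

lemma fval_nonneg:
  assumes "density_op D (Suc N) rho" and "perm_inv D (Suc N) rho"
    and "(\<Sum>a<D. psi a * cnj (psi a)) = 1" and "0 \<le> lam"
  shows "0 \<le> fval D N psi lam rho"
proof -
  have "0 \<le> real (Suc N) * fval D N psi lam rho"
    unfolding fval_count[OF assms(2)] using assms(4)
    by (intro sum_nonneg mult_nonneg_nonneg pattern_weight_nonneg[OF assms(1,3)])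
      (simp add: target_count_def)
  then show ?thesis by (simp add: zero_le_mult_iff)
qed

lemma zeta_k_le_feasible:
  assumes psi: "(\<Sum>a<D. psi a * cnj (psi a)) = 1" and N: "1 \<le> N" and m: "m \<le> N"
    and l0: "0 < lam" and l1: "lam < 1" and d0: "0 < delta"
    and rho: "rho \<in> feasible D N psi lam delta"
  shows "zeta_k N delta lam m \<le> fval D N psi lam rho"
    and "zeta_k N delta lam m / delta \<le> fval D N psi lam rho / pval D N psi lam rho"
proof -
  let ?p = "pval D N psi lam rho" and ?f = "fval D N psi lam rho"
  let ?a = "zeta_k_offset N lam m" and ?b = "zeta_k_slope N lam m"
  have dens: "density_op D (Suc N) rho" and inv: "perm_inv D (Suc N) rho" and pd: "delta \<le> ?p"
    using rho by (simp_all add: feasible_def)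
  have b: "0 \<le> ?b" by (rule zeta_k_slope_nonneg[OF l0 l1 N m])
  have a: "?a \<le> 0" by (rule zeta_k_offset_nonpos[OF l0 l1 N])
  have lb: "?a + ?b * ?p \<le> ?f"
    using fval_ge_zeta_k[OF dens inv psi l0 l1 N, of m] by (simp add: zeta_k_affine[OF l0 l1 N])
  then show "zeta_k N delta lam m \<le> ?f"
    using mult_left_mono[OF pd b] by (simp add: zeta_k_affine[OF l0 l1 N])
  have "(?a + ?b * delta) * ?p \<le> (?a + ?b * ?p) * delta"
    using mult_right_mono_neg[OF pd a] by (simp add: algebra_simps)
  also have "\<dots> \<le> ?f * delta" using lb d0 by (simp add: mult_right_mono)
  finally show "zeta_k N delta lam m / delta \<le> ?f / ?p"
    using d0 pd by (simp add: zeta_k_affine[OF l0 l1 N] divide_simps)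
qed

lemma zeta_formula_le:
  assumes psi: "(\<Sum>a<D. psi a * cnj (psi a)) = 1" and N: "1 \<le> N"
    and l0: "0 < lam" and l1: "lam < 1" and d0: "0 < delta" and d1: "delta \<le> 1"
    and rho: "rho \<in> feasible D N psi lam delta"
  shows "zeta_formula N delta lam \<le> fval D N psi lam rho"
    and "zeta_formula N delta lam / delta \<le> fval D N psi lam rho / pval D N psi lam rho"
proof -
  have "zeta_formula N delta lam \<le> fval D N psi lam rho
    \<and> zeta_formula N delta lam / delta \<le> fval D N psi lam rho / pval D N psi lam rho"
  proof (cases "delta \<le> lam ^ N")
    case True
    have "0 \<le> fval D N psi lam rho"
      using rho l0 by (intro fval_nonneg[OF _ _ psi]) (simp_all add: feasible_def)
    moreover have "delta \<le> pval D N psi lam rho"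
      using rho by (simp add: feasible_def)
    ultimately show ?thesis using True d0 by (simp add: zeta_formula_def)
  next
    case False
    then have "kstar N delta lam \<le> N" by (intro kstar_greatest(1)[OF l0 l1 d1]) simp
    from zeta_k_le_feasible[OF psi N this l0 l1 d0 rho] show ?thesis
      using False by (simp add: zeta_formula_def)
  qed
  then show "zeta_formula N delta lam \<le> fval D N psi lam rho"
    and "zeta_formula N delta lam / delta \<le> fval D N psi lam rho / pval D N psi lam rho"
    by simp_all
qed

lemma exists_feasible_fval_zero:
  assumes D: "2 \<le> D" and psi: "(\<Sum>a<D. psi a * cnj (psi a)) = 1" and dl: "delta \<le> lam ^ N"
  obtains rho where "rho \<in> feasible D N psi lam delta" and "fval D N psi lam rho = 0"
proof -
  obtain rho where dens: "density_op D (Suc N) rho" and inv: "perm_inv D (Suc N) rho"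
    and "real (Suc N) * pval D N psi lam rho = target_count (Suc N) 1 lam (N + 1)"
    and "real (Suc N) * fval D N psi lam rho = target_count (Suc N) 0 lam (N + 1)"
    using exists_state_on_layers[OF D psi, where al = 0 and be = 1 and m = N] by auto
  then have "pval D N psi lam rho = lam ^ N" and "fval D N psi lam rho = 0"
    by (simp_all add: target_count_def)
  then show ?thesis using dens inv dl by (intro that[of rho]) (simp_all add: feasible_def)
qed

lemma exists_feasible_fval_zeta_k:
  assumes D: "2 \<le> D" and psi: "(\<Sum>a<D. psi a * cnj (psi a)) = 1" and N: "1 \<le> N"
    and l0: "0 < lam" and l1: "lam < 1" and d1: "delta \<le> 1" and dl: "lam ^ N < delta"
  obtains rho where "rho \<in> feasible D N psi lam delta" and "pval D N psi lam rho = delta"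
    and "fval D N psi lam rho = zeta_k N delta lam (kstar N delta lam)"
proof -
  let ?m = "kstar N delta lam"
  let ?g0 = "target_count (Suc N) 1 lam ?m" and ?g1 = "target_count (Suc N) 1 lam (?m + 1)"
  let ?a = "zeta_k_offset N lam ?m" and ?b = "zeta_k_slope N lam ?m"
  have m: "?m \<le> N" and "(real N + 1) * delta \<le> kstar_lhs N lam ?m"
    and "kstar_lhs N lam (?m + 1) < (real N + 1) * delta"
    using kstar_greatest[OF l0 l1 d1 dl] by simp_all
  then have "real (Suc N) * delta \<le> ?g0" and "?g1 < real (Suc N) * delta"
    by (simp_all add: kstar_lhs_eq_target_count add.commute)
  then obtain al be where "0 \<le> al" "0 \<le> be" and ab: "al + be = 1"
    and mix: "al * ?g0 + be * ?g1 = real (Suc N) * delta"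
    using convex_combination_between[of ?g1 "real (Suc N) * delta" ?g0] by auto
  then obtain rho where dens: "density_op D (Suc N) rho" and inv: "perm_inv D (Suc N) rho"
    and p: "real (Suc N) * pval D N psi lam rho = al * ?g0 + be * ?g1"
    and f: "real (Suc N) * fval D N psi lam rho
      = al * target_count (Suc N) 0 lam ?m + be * target_count (Suc N) 0 lam (?m + 1)"
    using exists_state_on_layers[OF D psi _ _ _ m] by blast
  have pd: "pval D N psi lam rho = delta" using p mix by simp
  have "target_count (Suc N) 0 lam ?m = ?b * ?g0 + real (Suc N) * ?a"
    and "target_count (Suc N) 0 lam (?m + 1) = ?b * ?g1 + real (Suc N) * ?a"
    using m by (intro target_count_touching[OF l0 l1 N]; simp)+
  then have "real (Suc N) * fval D N psi lam rho
      = ?b * (al * ?g0 + be * ?g1) + real (Suc N) * ?a * (al + be)"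
    unfolding f by (simp add: algebra_simps)
  also have "\<dots> = real (Suc N) * zeta_k N delta lam ?m"
    unfolding mix ab zeta_k_affine[OF l0 l1 N] by (simp add: algebra_simps)
  finally show ?thesis
    using dens inv pd by (intro that[of rho]) (simp_all add: feasible_def)
qed

lemma zeta_formula_attained:
  assumes D: "2 \<le> D" and psi: "(\<Sum>a<D. psi a * cnj (psi a)) = 1" and N: "1 \<le> N"
    and l0: "0 < lam" and l1: "lam < 1" and d1: "delta \<le> 1"
  obtains rho where "rho \<in> feasible D N psi lam delta"
    and "fval D N psi lam rho = zeta_formula N delta lam"
    and "fval D N psi lam rho / pval D N psi lam rho = zeta_formula N delta lam / delta"
proof (cases "delta \<le> lam ^ N")
  case True
  with exists_feasible_fval_zero[OF D psi] obtain rho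
    where "rho \<in> feasible D N psi lam delta" and "fval D N psi lam rho = 0" .
  with True show ?thesis by (intro that[of rho]) (simp_all add: zeta_formula_def)
next
  case False
  then have "lam ^ N < delta" by simp
  with exists_feasible_fval_zeta_k[OF D psi N l0 l1 d1] obtain rho
    where "rho \<in> feasible D N psi lam delta" and "pval D N psi lam rho = delta"
      and "fval D N psi lam rho = zeta_k N delta lam (kstar N delta lam)" .
  with False show ?thesis by (intro that[of rho]) (simp_all add: zeta_formula_def)
qed

lemma Inf_image_eq_at_minimizer:
  fixes f :: "'a \<Rightarrow> 'b::conditionally_complete_linorder"
  assumes "x \<in> A" and "\<And>y. y \<in> A \<Longrightarrow> f x \<le> f y"
  shows "Inf (f ` A) = f x"
  using assms by (intro cInf_eq_minimum) auto

theorem theorem1: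
  fixes D N :: nat and psi :: "nat \<Rightarrow> complex" and lam delta :: real
  assumes "D \<ge> 2"
    and "(\<Sum>a<D. (cmod (psi a))\<^sup>2) = 1"
    and "N \<ge> 1"
    and "0 < lam" and "lam < 1"
    and "0 < delta" and "delta \<le> 1"
  shows "zeta D N psi lam delta = zeta_formula N delta lam
    \<and> Ffid D N psi lam delta = zeta D N psi lam delta / delta"
proof -
  have "(\<Sum>a<D. psi a * cnj (psi a)) = of_real (\<Sum>a<D. (cmod (psi a))\<^sup>2)"
    by (simp only: of_real_sum complex_norm_square)
  then have psi: "(\<Sum>a<D. psi a * cnj (psi a)) = 1" using assms(2) by simp
  note lower = zeta_formula_le[OF psi assms(3-7)]
  obtain rho where rho: "rho \<in> feasible D N psi lam delta"
    and f: "fval D N psi lam rho = zeta_formula N delta lam"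
    and q: "fval D N psi lam rho / pval D N psi lam rho = zeta_formula N delta lam / delta"
    using zeta_formula_attained[OF assms(1) psi assms(3-5,7)] .
  have "zeta D N psi lam delta = fval D N psi lam rho"
    unfolding zeta_def by (rule Inf_image_eq_at_minimizer[OF rho]) (simp add: f lower)
  moreover have "Ffid D N psi lam delta = fval D N psi lam rho / pval D N psi lam rho"
    unfolding Ffid_def by (rule Inf_image_eq_at_minimizer[OF rho]) (simp add: q lower)
  ultimately show ?thesis using f q by simp
qed

end
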